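(* For any integers $n\ge3$ and $1\le m\le(n-1)^2$, letting $d_n$ denote the in-degree of vertex $n$ in $\mathbb G(n,m)$, the graph $\mathbb G(n-1,m-d_n)$ is well defined and equals the subgraph of $\mathbb G(n,m)$ induced by the vertex subset $\{1,\dots,n-1\}$.
   Context: For integers $n\ge2$ and $0\le m\le n(n-1)$, $\mathbb G(n,m)$ is the simple directed graph on vertex set $\{1,\dots,n\}$ whose arc set is $\{(\lceil \frac{i}{n-1}\rceil,\ n-((i-1)\bmod n)) : i=1,\dots,m\}$, where an arc $(j,k)$ goes from $j$ to $k$ and $a\bmod b\in\{0,\dots,b-1\}$; these $m$ pairs are pairwise distinct pairs of distinct vertices. The subgraph induced by a vertex subset $S$ has vertex set $S$ and all arcs of the graph with both endpoints in $S$. *)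

theory Defs
  imports Complex_Main
begin

text \<open>A digraph is represented as a pair (vertex set, arc set); an arc (j,k) goes from j to k.\<close>

definition GG :: "nat \<Rightarrow> nat \<Rightarrow> nat set \<times> (nat \<times> nat) set" where
  "GG n m = ({1..n},
     {(nat \<lceil>real i / real (n - 1)\<rceil>, n - ((i - 1) mod n)) | i. i \<in> {1..m}})"

definition induced_subgraph :: "'a set \<times> ('a \<times> 'a) set \<Rightarrow> 'a set \<Rightarrow> 'a set \<times> ('a \<times> 'a) set" where
  "induced_subgraph G S = (S, {(j, k). (j, k) \<in> snd G \<and> j \<in> S \<and> k \<in> S})"

definition in_degree :: "'a set \<times> ('a \<times> 'a) set \<Rightarrow> 'a \<Rightarrow> nat" where
  "in_degree G v = card {u. (u, v) \<in> snd G}"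

definition GG_wd :: "nat \<Rightarrow> nat \<Rightarrow> bool" where
  "GG_wd n m \<longleftrightarrow> 2 \<le> n \<and> m \<le> n * (n - 1)"

end

theory Submission
  imports Defs
begin

text \<open>Number the arcs of G(n,m) from 0: arc k goes from k div (n-1) + 1 to n - k mod n.
  The arcs entering n are those with n dividing k, and since m \<le> (n-1)^2 no arc leaves n,
  so the induced subgraph keeps exactly the arcs whose index is not a multiple of n.
  The k-th number not divisible by n, namely k + k div (n-1) + 1, carries arc k of
  G(n-1,\<cdot>) to the corresponding arc of G(n,\<cdot>), and the non-multiples of n below m
  are exactly the first m - d of them, where d counts the multiples.\<close>

definition GG_arc :: "nat \<Rightarrow> nat \<Rightarrow> nat \<times> nat" where
  "GG_arc n k = (k div (n - 1) + 1, n - k mod n)"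

definition nth_nonmultiple :: "nat \<Rightarrow> nat \<Rightarrow> nat" where
  "nth_nonmultiple n k = k + k div (n - 1) + 1"

lemma nat_ceiling_divide:
  assumes "0 < i" "0 < N"
  shows "nat \<lceil>real i / real N\<rceil> = (i - 1) div N + 1"
proof -
  define q r where "q = (i - 1) div N" and "r = (i - 1) mod N"
  have i: "real i = real q * real N + real r + 1" and "r < N"
    using assms by (simp_all add: q_def r_def flip: of_nat_mult of_nat_add)
  have "\<lceil>real i / real N\<rceil> = int q + 1"
  proof (rule ceiling_unique)
    show "real_of_int (int q + 1) - 1 < real i / real N"
      using assms i by (simp add: field_simps)
    show "real i / real N \<le> real_of_int (int q + 1)"
      using assms i \<open>r < N\<close> by (simp add: field_simps)
  qed
  then show ?thesis by (simp add: q_def)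
qed

lemma GG_altdef:
  assumes "2 \<le> n"
  shows "GG n m = ({1..n}, GG_arc n ` {..<m})"
proof -
  have "GG_arc n ` {..<m} = (\<lambda>i. GG_arc n (i - 1)) ` {1..m}"
    by (force simp: image_iff intro: bexI[where x = "Suc _"])
  also have "\<dots> = (\<lambda>i. (nat \<lceil>real i / real (n - 1)\<rceil>, n - (i - 1) mod n)) ` {1..m}"
    using assms by (intro image_cong) (simp_all add: GG_arc_def nat_ceiling_divide del: of_nat_diff)
  finally show ?thesis by (auto simp: GG_def)
qed

lemma inj_GG_arc:
  assumes "2 \<le> n"
  shows "inj (GG_arc n)"
proof (rule linorder_injI)
  fix a b :: nat
  assume "a < b"
  show "GG_arc n a \<noteq> GG_arc n b"
  proof
    assume "GG_arc n a = GG_arc n b"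
    then have "a div (n - 1) = b div (n - 1)" and "n - a mod n = n - b mod n"
      by (simp_all add: GG_arc_def)
    then have "a mod n = b mod n"
      using mod_less_divisor[of n a] mod_less_divisor[of n b] assms by linarith
    obtain q where "a = q * (n - 1) + a mod (n - 1)" and "b = q * (n - 1) + b mod (n - 1)"
      using div_mult_mod_eq \<open>a div (n - 1) = b div (n - 1)\<close> by metis
    then have "b - a < n - 1"
      using mod_less_divisor[of "n - 1" b] assms by linarith
    moreover have "n dvd b - a"
      using \<open>a mod n = b mod n\<close> \<open>a < b\<close> mod_eq_dvd_iff_nat[of a b n] by simp
    ultimately show False
      using \<open>a < b\<close> by (auto dest: dvd_imp_le)
  qed
qed

lemma in_degree_GG:
  assumes "2 \<le> n"
  shows "in_degree (GG n m) n = card {k. k < m \<and> n dvd k}"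
proof -
  have target: "snd (GG_arc n k) = n \<longleftrightarrow> n dvd k" for k
    using assms by (auto simp: GG_arc_def dvd_eq_mod_eq_0)
  have "{u. (u, n) \<in> GG_arc n ` {..<m}} = (\<lambda>k. fst (GG_arc n k)) ` {k. k < m \<and> n dvd k}"
  proof (intro set_eqI iffI)
    fix u assume "u \<in> {u. (u, n) \<in> GG_arc n ` {..<m}}"
    then obtain k where "k < m" "GG_arc n k = (u, n)" by auto
    then show "u \<in> (\<lambda>k. fst (GG_arc n k)) ` {k. k < m \<and> n dvd k}"
      using target[of k] by (auto intro!: image_eqI[where x = k])
  next
    fix u assume "u \<in> (\<lambda>k. fst (GG_arc n k)) ` {k. k < m \<and> n dvd k}"
    then obtain k where "k < m" "n dvd k" "u = fst (GG_arc n k)" by auto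
    then have "GG_arc n k = (u, n)" using target[of k] by (simp add: prod_eq_iff)
    then show "u \<in> {u. (u, n) \<in> GG_arc n ` {..<m}}" using \<open>k < m\<close> by force
  qed
  moreover have "inj_on (\<lambda>k. fst (GG_arc n k)) {k. k < m \<and> n dvd k}"
  proof (rule inj_onI)
    fix a b assume "a \<in> {k. k < m \<and> n dvd k}" "b \<in> {k. k < m \<and> n dvd k}"
      and "fst (GG_arc n a) = fst (GG_arc n b)"
    then have "GG_arc n a = GG_arc n b" using target[of a] target[of b] by (simp add: prod_eq_iff)
    then show "a = b" using inj_GG_arc[OF assms] by (simp add: inj_eq)
  qed
  ultimately show ?thesis by (simp add: in_degree_def GG_altdef[OF assms] card_image)
qed

lemma card_multiples_less:
  fixes n m :: nat
  assumes "0 < n" "0 < m"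
  shows "card {k. k < m \<and> n dvd k} = (m - 1) div n + 1"
proof -
  have "{k. k < m \<and> n dvd k} = (\<lambda>t. t * n) ` {..(m - 1) div n}"
  proof (intro set_eqI iffI)
    fix k assume "k \<in> {k. k < m \<and> n dvd k}"
    then obtain t where "k = t * n" and "t * n < m"
      by (metis dvd_def mem_Collect_eq mult.commute)
    then show "k \<in> (\<lambda>t. t * n) ` {..(m - 1) div n}"
      using assms by (auto simp: less_eq_div_iff_mult_less_eq)
  next
    fix k assume "k \<in> (\<lambda>t. t * n) ` {..(m - 1) div n}"
    then show "k \<in> {k. k < m \<and> n dvd k}"
      using assms by (auto simp: less_eq_div_iff_mult_less_eq)
  qed
  then show ?thesis using assms by (simp add: card_image inj_on_def)
qed

lemma mult_add_less_mult_add_iff: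
  fixes b q s Q R :: nat
  assumes "s < b" and "R \<le> b"
  shows "q * b + s < Q * b + R \<longleftrightarrow> q < Q \<or> q = Q \<and> s < R"
proof (cases q Q rule: linorder_cases)
  case less
  then have "Suc q * b \<le> Q * b" by (intro mult_le_mono1) simp
  then show ?thesis using less assms by simp
next
  case greater
  then have "Suc Q * b \<le> q * b" by (intro mult_le_mono1) simp
  then show ?thesis using greater assms by simp
qed simp

lemma Suc_div_Suc_eq_div:
  fixes x M :: nat
  assumes "x < 2 * M"
  shows "Suc x div Suc M = x div M"
  using assms by (cases "x < M") (simp_all add: le_div_geq div_less)

lemma nth_nonmultiple_eq: "nth_nonmultiple n k = k div (n - 1) * n + k mod (n - 1) + 1"
proof (cases n)
  case (Suc N)
  then show ?thesis
    using div_mult_mod_eq[of k N] by (simp add: nth_nonmultiple_def algebra_simps)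
qed (simp add: nth_nonmultiple_def)

lemma nth_nonmultiple_mod:
  assumes "2 \<le> n"
  shows "nth_nonmultiple n k mod n = k mod (n - 1) + 1"
proof -
  have "k mod (n - 1) + 1 < n" using assms mod_less_divisor[of "n - 1" k] by linarith
  then show ?thesis by (simp add: nth_nonmultiple_eq)
qed

lemma nth_nonmultiple_not_dvd: "2 \<le> n \<Longrightarrow> \<not> n dvd nth_nonmultiple n k"
  by (simp add: dvd_eq_mod_eq_0 nth_nonmultiple_mod)

lemma nth_nonmultiple_rank:
  assumes "2 \<le> n" and "\<not> n dvd k"
  shows "nth_nonmultiple n (k - k div n - 1) = k"
proof -
  obtain r where r: "k mod n = Suc r" using assms(2) by (metis dvd_eq_mod_eq_0 not0_implies_Suc)
  then have "r < n - 1" using mod_less_divisor[of n k] assms(1) by linarith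
  have "k div n \<le> k div n * n" using assms(1) by simp
  then have rank: "k - k div n - 1 = k div n * (n - 1) + r"
    using div_mult_mod_eq[of k n] r by (simp add: algebra_simps)
  then have "(k - k div n - 1) div (n - 1) = k div n"
    using \<open>r < n - 1\<close> by simp
  moreover have "k div n + 1 \<le> k"
    using div_mult_mod_eq[of k n] r \<open>k div n \<le> k div n * n\<close> by linarith
  ultimately show ?thesis by (simp add: nth_nonmultiple_def)
qed

lemma nth_nonmultiple_less_iff:
  assumes "2 \<le> n" and "0 < m"
  shows "nth_nonmultiple n k < m \<longleftrightarrow> k < m - ((m - 1) div n + 1)"
proof -
  define q s Q R where "q = k div (n - 1)" and "s = k mod (n - 1)"
    and "Q = (m - 1) div n" and "R = (m - 1) mod n"
  have "s < n - 1" and "R < n" using assms by (simp_all add: s_def R_def)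
  have m: "m = Q * n + R + 1" using assms(2) div_mult_mod_eq[of "m - 1" n] by (simp add: Q_def R_def)
  have "nth_nonmultiple n k < m \<longleftrightarrow> q * n + s < Q * n + R"
    by (simp add: nth_nonmultiple_eq m q_def s_def)
  also have "\<dots> \<longleftrightarrow> q < Q \<or> q = Q \<and> s < R"
    using \<open>s < n - 1\<close> \<open>R < n\<close> by (intro mult_add_less_mult_add_iff) simp_all
  also have "\<dots> \<longleftrightarrow> q * (n - 1) + s < Q * (n - 1) + R"
    using \<open>s < n - 1\<close> \<open>R < n\<close> by (intro mult_add_less_mult_add_iff[symmetric]) simp_all
  also have "q * (n - 1) + s = k" unfolding q_def s_def by (rule div_mult_mod_eq)
  also have "Q * (n - 1) + R = m - (Q + 1)" using assms(1) by (simp add: m algebra_simps)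
  finally show ?thesis by (simp add: Q_def)
qed

lemma nth_nonmultiple_image:
  assumes "2 \<le> n" and "0 < m"
  shows "nth_nonmultiple n ` {..<m - ((m - 1) div n + 1)} = {k. k < m \<and> \<not> n dvd k}"
proof (intro set_eqI iffI)
  fix k assume "k \<in> nth_nonmultiple n ` {..<m - ((m - 1) div n + 1)}"
  then show "k \<in> {k. k < m \<and> \<not> n dvd k}"
    using assms nth_nonmultiple_less_iff nth_nonmultiple_not_dvd by auto
next
  fix k assume "k \<in> {k. k < m \<and> \<not> n dvd k}"
  then have "k = nth_nonmultiple n (k - k div n - 1)" and "k < m"
    using assms(1) nth_nonmultiple_rank by auto
  then show "k \<in> nth_nonmultiple n ` {..<m - ((m - 1) div n + 1)}"
    using assms nth_nonmultiple_less_iff by (metis image_eqI lessThan_iff)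
qed

lemma GG_arc_nth_nonmultiple:
  assumes "k < (n - 1) * (n - 2)"
  shows "GG_arc n (nth_nonmultiple n k) = GG_arc (n - 1) k"
proof -
  define M where "M = n - 2"
  have "0 < M" using assms unfolding M_def by (metis gr0I mult_0_right not_less_zero)
  then have n: "n = M + 2" by (simp add: M_def)
  define q s where "q = k div (M + 1)" and "s = k mod (M + 1)"
  have "q < M" using assms by (simp add: q_def n div_less_iff_less_mult mult.commute)
  have "s \<le> M" using mod_less_divisor[of "M + 1" k] by (simp add: s_def)
  have k_eq: "k = q * M + (q + s)"
    using div_mult_mod_eq[of k "Suc M"] by (simp add: q_def s_def)
  have "nth_nonmultiple n k = q * Suc M + Suc (q + s)"
    by (simp add: nth_nonmultiple_eq n q_def s_def)
  then have "nth_nonmultiple n k div (n - 1) = q + Suc (q + s) div Suc M"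
    using div_mult_self3[of "Suc M" q "Suc (q + s)"] by (simp only: n) simp
  also have "Suc (q + s) div Suc M = (q + s) div M"
    using \<open>q < M\<close> \<open>s \<le> M\<close> by (intro Suc_div_Suc_eq_div) simp
  also have "q + (q + s) div M = k div (n - 1 - 1)"
    using \<open>0 < M\<close> k_eq by (simp add: n)
  finally have source: "nth_nonmultiple n k div (n - 1) = k div (n - 1 - 1)" .
  have "n - nth_nonmultiple n k mod n = n - 1 - k mod (n - 1)"
    using nth_nonmultiple_mod[of n k] by (simp add: n)
  with source show ?thesis by (simp add: GG_arc_def)
qed

lemma nth_nonmultiple_square:
  assumes "2 \<le> n"
  shows "nth_nonmultiple n ((n - 1) * (n - 2)) = (n - 1)\<^sup>2"
proof -
  have "(n - 1) * (n - 2) div (n - 1) = n - 2" and "(n - 1) * (n - 2) mod (n - 1) = 0"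
    using assms by simp_all
  moreover obtain M where "n = M + 2" using assms by (metis le_add_diff_inverse2)
  ultimately show ?thesis
    unfolding nth_nonmultiple_eq by (simp add: power2_eq_square)
qed

lemma induced_subgraph_GG:
  assumes "2 \<le> n" and "m \<le> (n - 1)\<^sup>2"
  shows "induced_subgraph (GG n m) {1..n - 1} = ({1..n - 1}, GG_arc n ` {k. k < m \<and> \<not> n dvd k})"
proof -
  have source: "fst (GG_arc n k) \<in> {1..n - 1}" if "k < m" for k
  proof -
    have "k div (n - 1) < n - 1"
      using that assms by (intro less_mult_imp_div_less) (simp add: power2_eq_square)
    then show ?thesis by (simp add: GG_arc_def)
  qed
  have target: "snd (GG_arc n k) \<in> {1..n - 1} \<longleftrightarrow> \<not> n dvd k" for k
  proof -
    have "k mod n < n" using assms(1) by simp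
    then show ?thesis by (auto simp: GG_arc_def dvd_eq_mod_eq_0)
  qed
  have "{(j, k). (j, k) \<in> GG_arc n ` {..<m} \<and> j \<in> {1..n - 1} \<and> k \<in> {1..n - 1}}
      = GG_arc n ` {k. k < m \<and> \<not> n dvd k}" (is "?arcs = _")
  proof (intro set_eqI iffI)
    fix e assume "e \<in> ?arcs"
    then have "e \<in> GG_arc n ` {..<m}" and "snd e \<in> {1..n - 1}" by (simp_all add: case_prod_beta)
    then obtain k where "k < m" and "e = GG_arc n k" and "snd (GG_arc n k) \<in> {1..n - 1}"
      by auto
    then show "e \<in> GG_arc n ` {k. k < m \<and> \<not> n dvd k}" using target by blast
  next
    fix e assume "e \<in> GG_arc n ` {k. k < m \<and> \<not> n dvd k}"
    then obtain k where "k < m" and "\<not> n dvd k" and "e = GG_arc n k" by auto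
    then show "e \<in> ?arcs" using source[of k] target[of k] by (simp_all add: case_prod_beta)
  qed
  then show ?thesis by (simp add: induced_subgraph_def GG_altdef[OF assms(1)])
qed

theorem lemma16:
  fixes n m :: nat
  assumes "n \<ge> 3" and "1 \<le> m" and "m \<le> (n - 1)^2"
  shows "in_degree (GG n m) n \<le> m
       \<and> GG_wd (n - 1) (m - in_degree (GG n m) n)
       \<and> GG (n - 1) (m - in_degree (GG n m) n) = induced_subgraph (GG n m) {1..n - 1}"
proof -
  have "2 \<le> n" "0 < m" using assms by simp_all
  define d where "d = in_degree (GG n m) n"
  have d: "d = (m - 1) div n + 1"
    using \<open>2 \<le> n\<close> \<open>0 < m\<close> by (simp add: d_def in_degree_GG card_multiples_less)
  have "d \<le> m"
    unfolding d_def in_degree_GG[OF \<open>2 \<le> n\<close>] by (rule card_mono[where B = "{..<m}", simplified]) auto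
  have "m - d \<le> (n - 1) * (n - 2)"
    using nth_nonmultiple_less_iff[OF \<open>2 \<le> n\<close> \<open>0 < m\<close>] nth_nonmultiple_square[OF \<open>2 \<le> n\<close>]
      assms(3) d by (metis not_less)
  then have wd: "GG_wd (n - 1) (m - d)"
    using assms(1) by (simp add: GG_wd_def numeral_2_eq_2)
  have "GG (n - 1) (m - d) = ({1..n - 1}, GG_arc n ` nth_nonmultiple n ` {..<m - d})"
    using assms(1) \<open>m - d \<le> (n - 1) * (n - 2)\<close>
    by (auto simp: GG_altdef image_image GG_arc_nth_nonmultiple intro!: image_cong)
  also have "\<dots> = ({1..n - 1}, GG_arc n ` {k. k < m \<and> \<not> n dvd k})"
    using nth_nonmultiple_image[OF \<open>2 \<le> n\<close> \<open>0 < m\<close>] by (simp add: d)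
  also have "\<dots> = induced_subgraph (GG n m) {1..n - 1}"
    using induced_subgraph_GG[OF \<open>2 \<le> n\<close> assms(3)] by simp
  finally show ?thesis
    using \<open>d \<le> m\<close> wd by (simp add: d_def)
qed

end
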